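(* Let $\mathcal{P}=\{1,\dots,M\}$, fix $i\in\mathcal{P}$, let $i'\notin\mathcal{P}$ be a new element (the replica of $i$), and put $\mathcal{P}^R=\mathcal{P}\cup\{i'\}$. Let $v(\cdot,\mathcal{P})\colon 2^{\mathcal{P}}\to\mathbb{R}$ and $v(\cdot,\mathcal{P}^R)\colon 2^{\mathcal{P}^R}\to\mathbb{R}$ be characteristic functions with $v(\mathcal{P},\mathcal{P})>0$ and $v(\mathcal{P}^R,\mathcal{P}^R)>0$, and let $a_i\in\mathbb{R}$. Assume: (1) $v(S,\mathcal{P})=v(S,\mathcal{P}^R)$ for all $S\subseteq\mathcal{P}$; (2) $v(S\cup\{i\},\mathcal{P}^R)-v(S,\mathcal{P}^R)\le a_i$ for every $S\subseteq\mathcal{P}^R\setminus\{i\}$ with $i'\in S$; (3) (supermodularity) $v(R\cup\{i\},\mathcal{P})-v(R,\mathcal{P})\le v(Q\cup\{i\},\mathcal{P})-v(Q,\mathcal{P})$ for all $R\subseteq Q\subseteq\mathcal{P}\setminus\{i\}$. Then $$\phi^R(i)\le \frac{\phi(i)\,v(\mathcal{P},\mathcal{P})+a_i}{2\,v(\mathcal{P}^R,\mathcal{P}^R)}.$$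
   Context: Normalized Shapley values: for the original market, $\phi(i)=\frac{1}{v(\mathcal{P},\mathcal{P})}\sum_{S\subseteq\mathcal{P}\setminus\{i\}}\frac{|S|!\,(M-|S|-1)!}{M!}\big(v(S\cup\{i\},\mathcal{P})-v(S,\mathcal{P})\big)$, and for the market with the replica (which has $M+1$ players), $\phi^R(i)=\frac{1}{v(\mathcal{P}^R,\mathcal{P}^R)}\sum_{S\subseteq\mathcal{P}^R\setminus\{i\}}\frac{|S|!\,(M-|S|)!}{(M+1)!}\big(v(S\cup\{i\},\mathcal{P}^R)-v(S,\mathcal{P}^R)\big)$. *)

theory Defs
  imports "HOL-Analysis.Analysis"
begin

definition norm_shapley :: "'a set \<Rightarrow> ('a set \<Rightarrow> real) \<Rightarrow> 'a \<Rightarrow> real" where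
  "norm_shapley N v i =
     (1 / v N) * (\<Sum>S \<in> Pow (N - {i}).
        (fact (card S) * fact (card N - card S - 1) / fact (card N)) * (v (S \<union> {i}) - v S))"

end

theory Submission
  imports Defs
begin

text \<open>
  Let \<open>K = \<P> - {i}\<close> and \<open>n = |K|\<close>. Splitting the coalitions of \<open>\<P>\<^sup>R\<close> according to whether
  they contain the replica, the Shapley sum of \<open>i\<close> in the replica market becomes
  \<open>A + B\<close>: \<open>A\<close> runs over \<open>S \<subseteq> K\<close> with the weights of an \<open>(n+2)\<close>-player game, and \<open>B\<close>
  collects the coalitions containing \<open>i'\<close>, whose marginal contributions are at most \<open>a\<^sub>i\<close>
  and whose weights sum to exactly \<open>1/2\<close>. Hence \<open>B \<le> a\<^sub>i/2\<close>.
  For \<open>A\<close>, comparing weights shows \<open>2A - \<phi>(i) v(\<P>)\<close> is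
  \<open>\<Sum>\<^sub>S |S|! (n-|S|)! (n - 2|S|) d(S) / (n+2)!\<close> with \<open>d\<close> the marginal contribution of \<open>i\<close>.
  Supermodularity makes \<open>d\<close> monotone, so a double-counting argument shows the average of \<open>d\<close>
  over \<open>t\<close>-subsets of \<open>K\<close> is nondecreasing in \<open>t\<close>; pairing \<open>t\<close> with \<open>n - t\<close> (a Chebyshev
  sum inequality) then makes this sum nonpositive, i.e. \<open>2A \<le> \<phi>(i) v(\<P>)\<close>.
\<close>

definition shapley_weight :: "nat \<Rightarrow> nat \<Rightarrow> real" where
  "shapley_weight n s = fact s * fact (n - s - 1) / fact n"

definition shapley_value :: "'a set \<Rightarrow> ('a set \<Rightarrow> real) \<Rightarrow> 'a \<Rightarrow> real" where
  "shapley_value N v i =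
     (\<Sum>S\<in>Pow (N - {i}). shapley_weight (card N) (card S) * (v (S \<union> {i}) - v S))"

lemma norm_shapley_eq_shapley_value: "norm_shapley N v i = shapley_value N v i / v N"
  unfolding norm_shapley_def shapley_value_def shapley_weight_def by simp

lemma shapley_weight_nonneg: "shapley_weight n s \<ge> 0"
  unfolding shapley_weight_def by simp

lemma two_shapley_weight_diff:
  assumes "c \<le> n"
  shows "2 * shapley_weight (n + 2) c - shapley_weight (n + 1) c
       = fact c * fact (n - c) * (real n - 2 * real c) / fact (n + 2)"
proof -
  have fact_n2: "fact (n + 2) = (real n + 2) * (fact (n + 1) :: real)"
    by (simp add: fact_Suc algebra_simps)
  have "shapley_weight (n + 2) c = fact c * fact (n - c) * (real (n - c) + 1) / fact (n + 2)"
    using assms by (simp add: shapley_weight_def Suc_diff_le fact_Suc algebra_simps)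
  moreover have "shapley_weight (n + 1) c = fact c * fact (n - c) * (real n + 2) / fact (n + 2)"
    unfolding shapley_weight_def fact_n2 by simp
  ultimately show ?thesis
    using assms by (simp add: of_nat_diff diff_divide_distrib[symmetric] algebra_simps)
qed

lemma sum_Pow_insert:
  assumes "finite K" and "r \<notin> K"
  shows "sum f (Pow (insert r K)) = sum f (Pow K) + (\<Sum>S\<in>Pow K. f (insert r S))"
proof -
  have "inj_on (insert r) (Pow K)"
    using assms(2) by (auto simp: inj_on_def)
  moreover have "sum f (Pow (insert r K)) = sum f (Pow K) + sum f (insert r ` Pow K)"
    unfolding Pow_insert by (rule sum.union_disjoint) (use assms in auto)
  ultimately show ?thesis by (simp add: sum.reindex)
qed

lemma shapley_value_insert:
  assumes "finite N" and "i \<in> N" and "r \<notin> N"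
  shows "shapley_value (insert r N) w i
       = (\<Sum>S\<in>Pow (N - {i}). shapley_weight (card N + 1) (card S) * (w (S \<union> {i}) - w S))
       + (\<Sum>S\<in>Pow (N - {i}).
            shapley_weight (card N + 1) (card S + 1) * (w (insert r S \<union> {i}) - w (insert r S)))"
proof -
  have "insert r N - {i} = insert r (N - {i})" "card (insert r N) = card N + 1"
    using assms by auto
  moreover have "card (insert r S) = card S + 1" if "S \<in> Pow (N - {i})" for S
  proof -
    have "finite S" "r \<notin> S"
      using that assms rev_finite_subset[of N S] by auto
    then show ?thesis by simp
  qed
  ultimately show ?thesis
    unfolding shapley_value_def using assms by (simp add: sum_Pow_insert)
qed

lemma sum_Pow_by_card:
  fixes d :: "'a set \<Rightarrow> 'b::semiring_0"
  assumes "finite K"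
  shows "(\<Sum>T\<in>Pow K. g (card T) * d T)
       = (\<Sum>t\<le>card K. g t * (\<Sum>T | T \<subseteq> K \<and> card T = t. d T))"
proof -
  have "(\<Sum>T\<in>Pow K. g (card T) * d T)
      = (\<Sum>t\<le>card K. \<Sum>T | T \<in> Pow K \<and> card T = t. g (card T) * d T)"
    by (rule sum.group[symmetric]) (auto simp: assms card_mono)
  then show ?thesis
    by (simp add: sum_distrib_left)
qed

lemma sum_card_subsets_double_count:
  fixes d :: "'a set \<Rightarrow> real"
  assumes fin: "finite K"
    and mono: "\<And>T j. T \<subseteq> K \<Longrightarrow> j \<in> K - T \<Longrightarrow> d T \<le> d (insert j T)"
  shows "real (card K - t) * (\<Sum>T | T \<subseteq> K \<and> card T = t. d T)
       \<le> real (Suc t) * (\<Sum>U | U \<subseteq> K \<and> card U = Suc t. d U)"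
proof -
  let ?A = "{T. T \<subseteq> K \<and> card T = t}" and ?B = "{U. U \<subseteq> K \<and> card U = Suc t}"
  have fin_subset: "finite T" if "T \<subseteq> K" for T
    using fin that finite_subset by blast
  have "real (card K - t) * sum d ?A = (\<Sum>T\<in>?A. \<Sum>j\<in>K - T. d T)"
    unfolding sum_distrib_left by (rule sum.cong) (auto simp: card_Diff_subset fin_subset)
  also have "\<dots> \<le> (\<Sum>T\<in>?A. \<Sum>j\<in>K - T. d (insert j T))"
    by (intro sum_mono) (auto intro: mono)
  also have "\<dots> = (\<Sum>(T, j)\<in>Sigma ?A (\<lambda>T. K - T). d (insert j T))"
    by (rule sum.Sigma) (use fin in auto)
  also have "\<dots> = (\<Sum>(U, j)\<in>Sigma ?B (\<lambda>U. U). d U)"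
    \<comment> \<open>a \<open>t\<close>-set with an outside point is the same as a \<open>(t+1)\<close>-set with a marked point\<close>
    by (rule sum.reindex_bij_witness[where i="\<lambda>(U, j). (U - {j}, j)" and j="\<lambda>(T, j). (insert j T, j)"])
       (auto simp: fin_subset card_Diff_singleton)
  also have "\<dots> = (\<Sum>U\<in>?B. \<Sum>j\<in>U. d U)"
    by (rule sum.Sigma[symmetric]) (use fin fin_subset in auto)
  also have "\<dots> = real (Suc t) * sum d ?B"
    unfolding sum_distrib_left by (rule sum.cong) auto
  finally show ?thesis .
qed

definition subset_average :: "'a set \<Rightarrow> ('a set \<Rightarrow> real) \<Rightarrow> nat \<Rightarrow> real" where
  "subset_average K d t = (\<Sum>T | T \<subseteq> K \<and> card T = t. d T) / real (card K choose t)"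

lemma subset_average_Suc_ge:
  fixes d :: "'a set \<Rightarrow> real"
  assumes fin: "finite K"
    and mono: "\<And>T j. T \<subseteq> K \<Longrightarrow> j \<in> K - T \<Longrightarrow> d T \<le> d (insert j T)"
    and t: "t < card K"
  shows "subset_average K d t \<le> subset_average K d (Suc t)"
proof -
  let ?n = "card K"
  let ?s = "\<lambda>t. \<Sum>T | T \<subseteq> K \<and> card T = t. d T"
  define Q where "Q = real (?n - t) * real (?n choose t)"
  have "Suc t * (?n choose Suc t) = (?n - t) * (?n choose t)"
    by (metis binomial_absorption binomial_absorb_comp)
  then have Q_Suc: "Q = real (Suc t) * real (?n choose Suc t)"
    unfolding Q_def by (metis of_nat_mult)
  have "Q > 0"
    using t unfolding Q_def by simp
  have "subset_average K d t = real (?n - t) * ?s t / Q"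
    using t unfolding subset_average_def Q_def by simp
  also have "\<dots> \<le> real (Suc t) * ?s (Suc t) / Q"
    using fin mono \<open>Q > 0\<close>
    by (intro divide_right_mono sum_card_subsets_double_count) simp_all
  also have "\<dots> = subset_average K d (Suc t)"
    unfolding subset_average_def Q_Suc using \<open>Q > 0\<close> by simp
  finally show ?thesis .
qed

lemma subset_average_mono:
  fixes d :: "'a set \<Rightarrow> real"
  assumes fin: "finite K"
    and mono: "\<And>T j. T \<subseteq> K \<Longrightarrow> j \<in> K - T \<Longrightarrow> d T \<le> d (insert j T)"
    and "t \<le> u" "u \<le> card K"
  shows "subset_average K d t \<le> subset_average K d u"
  using assms(3,4)
proof (induction u rule: dec_induct)
  case (step m)
  then show ?case
    using subset_average_Suc_ge[OF fin mono, of m] by simp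
qed simp

lemma sum_centered_weight_nonpos:
  fixes D :: "nat \<Rightarrow> real"
  assumes mono: "\<And>t u. t \<le> u \<Longrightarrow> u \<le> n \<Longrightarrow> D t \<le> D u"
  shows "(\<Sum>t\<le>n. (real n - 2 * real t) * D t) \<le> 0"
proof -
  let ?F = "\<Sum>t\<le>n. (real n - 2 * real t) * D t"
  have reflected: "?F = (\<Sum>t\<le>n. (real n - 2 * real (n - t)) * D (n - t))"
    by (rule sum.reindex_bij_witness[where i="\<lambda>t. n - t" and j="\<lambda>t. n - t"]) auto
  have "2 * ?F = (\<Sum>t\<le>n. (real n - 2 * real t) * D t + (real n - 2 * real (n - t)) * D (n - t))"
    unfolding sum.distrib using reflected by linarith
  also have "\<dots> = (\<Sum>t\<le>n. (real n - 2 * real t) * (D t - D (n - t)))"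
    by (intro sum.cong refl) (simp add: of_nat_diff algebra_simps)
  also have "\<dots> \<le> 0"
  proof (rule sum_nonpos)
    fix t assume "t \<in> {..n}"
    show "(real n - 2 * real t) * (D t - D (n - t)) \<le> 0"
    proof (cases "2 * t \<le> n")
      case True
      then have "D t \<le> D (n - t)" by (intro mono) auto
      with True show ?thesis by (intro mult_nonneg_nonpos) auto
    next
      case False
      then have "D (n - t) \<le> D t" using \<open>t \<in> {..n}\<close> by (intro mono) auto
      with False show ?thesis by (intro mult_nonpos_nonneg) auto
    qed
  qed
  finally show ?thesis by simp
qed

lemma sum_Pow_centered_weight_nonpos:
  fixes d :: "'a set \<Rightarrow> real"
  assumes fin: "finite K"
    and mono: "\<And>T j. T \<subseteq> K \<Longrightarrow> j \<in> K - T \<Longrightarrow> d T \<le> d (insert j T)"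
  shows "(\<Sum>T\<in>Pow K. fact (card T) * fact (card K - card T)
            * (real (card K) - 2 * real (card T)) * d T) \<le> 0"
proof -
  let ?n = "card K"
  have "(\<Sum>T\<in>Pow K. fact (card T) * fact (?n - card T) * (real ?n - 2 * real (card T)) * d T)
      = (\<Sum>t\<le>?n. fact t * fact (?n - t) * (real ?n - 2 * real t)
                  * (\<Sum>T | T \<subseteq> K \<and> card T = t. d T))"
    by (rule sum_Pow_by_card[OF fin, where g="\<lambda>t. fact t * fact (?n - t) * (real ?n - 2 * real t)"])
  also have "\<dots> = fact ?n * (\<Sum>t\<le>?n. (real ?n - 2 * real t) * subset_average K d t)"
    unfolding sum_distrib_left[of "fact ?n"] subset_average_def
    by (intro sum.cong refl) (simp add: binomial_fact)
  also have "\<dots> \<le> 0"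
    using sum_centered_weight_nonpos[OF subset_average_mono[OF fin mono]]
    by (simp add: mult_nonneg_nonpos)
  finally show ?thesis .
qed

lemma sum_Pow_shapley_weight_doubled_le:
  fixes d :: "'a set \<Rightarrow> real"
  assumes fin: "finite K"
    and mono: "\<And>T j. T \<subseteq> K \<Longrightarrow> j \<in> K - T \<Longrightarrow> d T \<le> d (insert j T)"
  shows "2 * (\<Sum>S\<in>Pow K. shapley_weight (card K + 2) (card S) * d S)
       \<le> (\<Sum>S\<in>Pow K. shapley_weight (card K + 1) (card S) * d S)"
proof -
  have "2 * (\<Sum>S\<in>Pow K. shapley_weight (card K + 2) (card S) * d S)
          - (\<Sum>S\<in>Pow K. shapley_weight (card K + 1) (card S) * d S)
      = (\<Sum>S\<in>Pow K. fact (card S) * fact (card K - card S)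
            * (real (card K) - 2 * real (card S)) * d S) / fact (card K + 2)"
    unfolding sum_distrib_left sum_subtractf[symmetric] sum_divide_distrib
  proof (intro sum.cong refl)
    fix S assume "S \<in> Pow K"
    then have "card S \<le> card K"
      using fin by (simp add: card_mono)
    then show "2 * (shapley_weight (card K + 2) (card S) * d S) - shapley_weight (card K + 1) (card S) * d S
        = fact (card S) * fact (card K - card S) * (real (card K) - 2 * real (card S)) * d S
            / fact (card K + 2)"
      using two_shapley_weight_diff[of "card S" "card K"] by (simp add: algebra_simps)
  qed
  also have "\<dots> \<le> 0"
    using sum_Pow_centered_weight_nonpos[OF fin mono] by (simp add: divide_nonpos_pos)
  finally show ?thesis by simp
qed

lemma sum_Pow_shapley_weight_Suc:
  assumes fin: "finite K"
  shows "(\<Sum>T\<in>Pow K. shapley_weight (card K + 2) (card T + 1)) = 1 / 2"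
proof -
  let ?n = "card K"
  have gauss: "(\<Sum>t\<le>m. real t + 1) = (real m + 1) * (real m + 2) / 2" for m
    by (induction m) (simp_all add: field_simps)
  have "(\<Sum>T\<in>Pow K. shapley_weight (?n + 2) (card T + 1))
      = (\<Sum>t\<le>?n. shapley_weight (?n + 2) (t + 1) * (\<Sum>T | T \<subseteq> K \<and> card T = t. 1))"
    using sum_Pow_by_card[OF fin, where g="\<lambda>t. shapley_weight (?n + 2) (t + 1)" and d="\<lambda>_. 1"]
    by simp
  also have "\<dots> = (\<Sum>t\<le>?n. (real t + 1) / ((real ?n + 1) * (real ?n + 2)))"
  proof (intro sum.cong refl)
    fix t assume "t \<in> {..?n}"
    define p where "p = (real ?n + 1) * (real ?n + 2)"
    have "p > 0"
      unfolding p_def by simp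
    have "fact (?n + 2) = p * (fact ?n :: real)"
      unfolding p_def by (simp add: fact_Suc algebra_simps)
    moreover have "fact (t + 1) = (real t + 1) * (fact t :: real)"
      by (simp add: fact_Suc algebra_simps)
    moreover have "?n + 2 - (t + 1) - 1 = ?n - t"
      by simp
    ultimately show "shapley_weight (?n + 2) (t + 1) * (\<Sum>T | T \<subseteq> K \<and> card T = t. 1)
        = (real t + 1) / ((real ?n + 1) * (real ?n + 2))"
      unfolding p_def[symmetric] using \<open>t \<in> {..?n}\<close> \<open>p > 0\<close>
      by (simp add: shapley_weight_def n_subsets[OF fin] binomial_fact field_simps)
  qed
  also have "\<dots> = 1 / 2"
    unfolding sum_divide_distrib[symmetric] gauss by simp
  finally show ?thesis .
qed

theorem shapley_value_replica_le:
  fixes v vR :: "'a set \<Rightarrow> real"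
  assumes fin: "finite N" and "i \<in> N" and "r \<notin> N"
    and agree: "\<And>S. S \<subseteq> N \<Longrightarrow> vR S = v S"
    and replica_bound: "\<And>S. S \<subseteq> insert r N - {i} \<Longrightarrow> r \<in> S \<Longrightarrow> vR (S \<union> {i}) - vR S \<le> a"
    and supermodular: "\<And>R Q. R \<subseteq> Q \<Longrightarrow> Q \<subseteq> N - {i} \<Longrightarrow>
                         v (R \<union> {i}) - v R \<le> v (Q \<union> {i}) - v Q"
  shows "2 * shapley_value (insert r N) vR i \<le> shapley_value N v i + a"
proof -
  define K where "K = N - {i}"
  define d where "d S = v (S \<union> {i}) - v S" for S
  define B where "B = (\<Sum>S\<in>Pow K. shapley_weight (card K + 2) (card S + 1)
                           * (vR (insert r S \<union> {i}) - vR (insert r S)))"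
  have "finite K" and card_N: "card N = card K + 1"
    using fin \<open>i \<in> N\<close> card_Suc_Diff1[OF fin \<open>i \<in> N\<close>] unfolding K_def by simp_all
  have "S \<union> {i} \<subseteq> N" "S \<subseteq> N" if "S \<in> Pow K" for S
    using that \<open>i \<in> N\<close> unfolding K_def by auto
  then have split: "shapley_value (insert r N) vR i
      = (\<Sum>S\<in>Pow K. shapley_weight (card K + 2) (card S) * d S) + B"
    using shapley_value_insert[OF fin \<open>i \<in> N\<close> \<open>r \<notin> N\<close>, of vR]
    unfolding B_def K_def[symmetric] card_N by (simp add: d_def agree)
  have "B \<le> (\<Sum>S\<in>Pow K. shapley_weight (card K + 2) (card S + 1) * a)"
    unfolding B_def using \<open>i \<in> N\<close> \<open>r \<notin> N\<close>
    by (intro sum_mono mult_left_mono replica_bound shapley_weight_nonneg) (auto simp: K_def)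
  also have "\<dots> = a / 2"
    using sum_Pow_shapley_weight_Suc[OF \<open>finite K\<close>] by (simp add: sum_distrib_right[symmetric])
  finally have "B \<le> a / 2" .
  have "d T \<le> d (insert j T)" if "T \<subseteq> K" "j \<in> K - T" for T j
    using supermodular[of T "insert j T"] that unfolding d_def K_def by auto
  then have "2 * (\<Sum>S\<in>Pow K. shapley_weight (card K + 2) (card S) * d S) \<le> shapley_value N v i"
    using sum_Pow_shapley_weight_doubled_le[OF \<open>finite K\<close>]
    unfolding shapley_value_def card_N K_def[symmetric] d_def[symmetric] by blast
  with split \<open>B \<le> a / 2\<close> show ?thesis by linarith
qed

theorem mainTheorem1:
  fixes M :: nat and i i' :: nat
    and v vR :: "nat set \<Rightarrow> real" and a_i :: real
  assumes hi: "i \<in> {1..M}"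
    and hi': "i' \<notin> {1..M}"
    and hvP: "v {1..M} > 0"
    and hvR: "vR (insert i' {1..M}) > 0"
    and h1: "\<And>S. S \<subseteq> {1..M} \<Longrightarrow> v S = vR S"
    and h2: "\<And>S. S \<subseteq> insert i' {1..M} - {i} \<Longrightarrow> i' \<in> S \<Longrightarrow>
               vR (S \<union> {i}) - vR S \<le> a_i"
    and h3: "\<And>R Q. R \<subseteq> Q \<Longrightarrow> Q \<subseteq> {1..M} - {i} \<Longrightarrow>
               v (R \<union> {i}) - v R \<le> v (Q \<union> {i}) - v Q"
  shows "norm_shapley (insert i' {1..M}) vR i
           \<le> (norm_shapley {1..M} v i * v {1..M} + a_i) / (2 * vR (insert i' {1..M}))"
proof -
  have "2 * shapley_value (insert i' {1..M}) vR i \<le> shapley_value {1..M} v i + a_i"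
    using shapley_value_replica_le[of "{1..M}" i i' vR v a_i] hi hi' h1 h2 h3 by simp
  then show ?thesis
    using hvP hvR by (simp add: norm_shapley_eq_shapley_value field_simps)
qed

end
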